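(* Let $k$ be a field of characteristic zero and $q\in k\setminus\{0\}$ not a root of unity. Let $f=a/d^m$ where $m\in\mathbb{N}$, $d\in k[x,y]$ is irreducible, and $a\in k(x)[y]$ is nonzero with $\deg_y(a)<\deg_y(d)$. Then $f$ is exact with respect to $(\Delta_{x,q},\Delta_y)$ if and only if $d\in k[y]$ and $a=\Delta_{x,q}(b)$ for some $b\in k(x)[y]$.
   Context: On $k(x,y)$: $\tau_{x,q}(f(x,y))=f(qx,y)$, $\sigma_y(f(x,y))=f(x,y+1)$, $\Delta_{x,q}=\tau_{x,q}-1$, $\Delta_y=\sigma_y-1$. A rational function $f$ is exact with respect to $(\Delta_{x,q},\Delta_y)$ if $f=\Delta_{x,q}(g)+\Delta_y(h)$ for some $g,h\in k(x,y)$. *)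

theory Defs
  imports "HOL-Computational_Algebra.Computational_Algebra"
begin

text \<open>Representation: k[x] = 'a poly, k(x) = 'a poly fract, k(x)[y] = 'a poly fract poly,
  k[x,y] = 'a poly poly (polynomials in y over k[x]),
  k(x,y) = ('a poly fract poly) fract (fraction field of k(x)[y]).\<close>

text \<open>Extension of a map on an integral domain to its fraction field
  (well defined for injective ring homomorphisms).\<close>
definition fract_lift :: "('b::idom \<Rightarrow> 'b) \<Rightarrow> 'b fract \<Rightarrow> 'b fract" where
  "fract_lift h f = (SOME r. \<forall>n d. d \<noteq> 0 \<longrightarrow> f = Fract n d \<longrightarrow> r = Fract (h n) (h d))"

definition tau_x :: "'a::field \<Rightarrow> 'a poly fract \<Rightarrow> 'a poly fract" where
  "tau_x q = fract_lift (\<lambda>p. p \<circ>\<^sub>p [:0, q:])"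

definition tau_xy :: "'a::field \<Rightarrow> 'a poly fract poly \<Rightarrow> 'a poly fract poly" where
  "tau_xy q P = map_poly (tau_x q) P"

definition tauK :: "'a::field \<Rightarrow> 'a poly fract poly fract \<Rightarrow> 'a poly fract poly fract" where
  "tauK q = fract_lift (tau_xy q)"

definition sigK :: "'a::field poly fract poly fract \<Rightarrow> 'a poly fract poly fract" where
  "sigK = fract_lift (\<lambda>P. P \<circ>\<^sub>p [:1, 1:])"

definition DeltaX :: "'a::field \<Rightarrow> 'a poly fract poly fract \<Rightarrow> 'a poly fract poly fract" where
  "DeltaX q f = tauK q f - f"

definition DeltaY :: "'a::field poly fract poly fract \<Rightarrow> 'a poly fract poly fract" where
  "DeltaY f = sigK f - f"

definition exact :: "'a::field \<Rightarrow> 'a poly fract poly fract \<Rightarrow> bool" where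
  "exact q f \<longleftrightarrow> (\<exists>g h. f = DeltaX q g + DeltaY h)"

definition emb_xy :: "'a::field poly poly \<Rightarrow> 'a poly fract poly" where
  "emb_xy d = map_poly to_fract d"

end

theory Submission
  imports Defs "HOL-Library.Groups_Big_Fun" "HOL-Library.Product_Plus"
begin

text \<open>\<open>\<int>\<^sup>2\<close> acts on \<open>k(x)[y]\<close> and \<open>k(x, y)\<close> by \<open>(s, t): x \<mapsto> q\<^sup>s x, y \<mapsto> y + t\<close>,
  so that \<open>\<tau>\<^sub>x\<^sub>,\<^sub>q = (1, 0)\<close> and \<open>\<sigma>\<^sub>y = (0, 1)\<close>. Fix a monic irreducible \<open>P \<in> k(x)[y]\<close>
  and a subgroup of \<open>\<int>\<^sup>2\<close> acting freely on the orbit of \<open>P\<close>. Summing over that orbit the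
  coefficients of \<open>1 / (z P)\<^sup>m\<close> in the partial fraction expansion, each moved back to \<open>P\<close>,
  gives a linear map that is invariant under the subgroup and sends \<open>a / P\<^sup>m\<close> to \<open>a\<close>.

  As \<open>q\<close> is not a root of unity and \<open>k\<close> has characteristic zero, the stabiliser of \<open>P\<close>
  is trivial unless \<open>P \<in> k[y]\<close>, where it is \<open>\<int> \<times> 0\<close>. In the first case the residue over
  the full orbit kills \<open>\<Delta>\<^sub>x g + \<Delta>\<^sub>y h\<close> but not \<open>a / P\<^sup>m\<close>, so an exact \<open>a / P\<^sup>m\<close> has
  \<open>\<tau> P = P\<close>; then the residue over the \<open>\<sigma>\<close>-orbit commutes with \<open>\<tau>\<close> and exhibits
  \<open>a = \<tau> b - b\<close>. Gauss's lemma carries \<open>P \<in> k[y]\<close> back to \<open>d\<close>. Conversely, if \<open>\<tau>\<close>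
  fixes \<open>d\<close>, then \<open>a / d\<^sup>m = \<Delta>\<^sub>x (b / d\<^sup>m)\<close>.\<close>

section \<open>Injective ring homomorphisms\<close>

locale inj_ring_hom =
  fixes h :: "'b::comm_ring_1 \<Rightarrow> 'c::comm_ring_1"
  assumes hom_add: "h (x + y) = h x + h y"
    and hom_mult: "h (x * y) = h x * h y"
    and hom_one: "h 1 = 1"
    and eq_0_imp: "h x = 0 \<Longrightarrow> x = 0"
begin

lemma hom_zero: "h 0 = 0"
  using hom_add[of 0 0] by simp

lemma hom_eq_0_iff: "h x = 0 \<longleftrightarrow> x = 0"
  using eq_0_imp hom_zero by blast

lemma hom_uminus: "h (- x) = - h x"
  using hom_add[of x "- x"] by (simp add: hom_zero eq_neg_iff_add_eq_0 add.commute)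

lemma hom_diff: "h (x - y) = h x - h y"
  using hom_add[of x "- y"] by (simp add: hom_uminus)

lemma hom_power: "h (x ^ n) = h x ^ n"
  by (induction n) (simp_all add: hom_one hom_mult)

lemma hom_sum: "h (sum f A) = (\<Sum>i\<in>A. h (f i))"
  by (induction A rule: infinite_finite_induct) (simp_all add: hom_zero hom_add)

lemma hom_of_nat: "h (of_nat n) = of_nat n"
  by (induction n) (simp_all add: hom_zero hom_one hom_add)

lemma hom_of_int: "h (of_int n) = of_int n"
  by (cases n rule: int_cases) (simp_all add: hom_of_nat hom_uminus del: of_nat_Suc)

lemma hom_dvd: "x dvd y \<Longrightarrow> h x dvd h y"
  by (auto simp: hom_mult)

lemma hom_unit: "x dvd 1 \<Longrightarrow> h x dvd 1"
  using hom_dvd[of x 1] by (simp add: hom_one)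

lemma degree_map_poly_hom: "degree (map_poly h p) = degree p"
  by (rule degree_map_poly) (simp add: hom_eq_0_iff)

lemma lead_coeff_map_poly_hom: "lead_coeff (map_poly h p) = h (lead_coeff p)"
  by (simp add: degree_map_poly_hom coeff_map_poly hom_zero)

lemma inj_ring_hom_map_poly: "inj_ring_hom (map_poly h)"
proof
  show "map_poly h (p + q) = map_poly h p + map_poly h q" for p q
    by (rule poly_eqI) (simp add: coeff_map_poly hom_zero hom_add)
  show "map_poly h (p * q) = map_poly h p * map_poly h q" for p q
    by (rule poly_eqI) (simp add: coeff_map_poly hom_zero coeff_mult hom_sum hom_mult)
  show "map_poly h 1 = 1" by (simp add: hom_one)
  show "map_poly h p = 0 \<Longrightarrow> p = 0" for p
    by (simp add: map_poly_eq_0_iff hom_eq_0_iff hom_zero)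
qed

lemma map_poly_pcompose_hom: "map_poly h (p \<circ>\<^sub>p s) = map_poly h p \<circ>\<^sub>p map_poly h s"
proof (induction p)
  case (pCons a p)
  interpret H: inj_ring_hom "map_poly h" by (rule inj_ring_hom_map_poly)
  show ?case
    using pCons by (simp add: pcompose_pCons map_poly_pCons hom_zero H.hom_add H.hom_mult)
qed simp

end

lemma inj_ring_hom_comp: "inj_ring_hom h \<Longrightarrow> inj_ring_hom g \<Longrightarrow> inj_ring_hom (\<lambda>x. h (g x))"
  by (simp add: inj_ring_hom_def)

lemma inj_ring_hom_to_fract: "inj_ring_hom (to_fract :: 'b::idom \<Rightarrow> 'b fract)"
  by unfold_locales simp_all

lemma inj_ring_hom_pcompose:
  fixes s :: "'b::idom poly"
  assumes "degree s = 1"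
  shows "inj_ring_hom (\<lambda>p. p \<circ>\<^sub>p s)"
  using assms by unfold_locales (auto simp: pcompose_add pcompose_mult pcompose_1 pcompose_eq_0)

lemma irreducible_automorphism_image:
  fixes h :: "'b::idom \<Rightarrow> 'b"
  assumes h: "inj_ring_hom h" and g: "inj_ring_hom g"
    and gh: "\<And>x. g (h x) = x" and hg: "\<And>x. h (g x) = x" and Q: "irreducible Q"
  shows "irreducible (h Q)"
proof (rule irreducibleI)
  show "h Q \<noteq> 0" using Q inj_ring_hom.hom_eq_0_iff[OF h] by auto
  show "\<not> h Q dvd 1"
    using Q inj_ring_hom.hom_unit[OF g, of "h Q"] gh by (auto simp: irreducible_def)
  fix a b assume "h Q = a * b"
  hence "Q = g a * g b" using gh[of Q] inj_ring_hom.hom_mult[OF g] by metis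
  hence "g a dvd 1 \<or> g b dvd 1" using Q by (auto dest: irreducibleD)
  thus "a dvd 1 \<or> b dvd 1" using inj_ring_hom.hom_unit[OF h] hg by metis
qed

lemma fract_lift_Fract:
  assumes h: "inj_ring_hom h" and d: "d \<noteq> 0"
  shows "fract_lift h (Fract n d) = Fract (h n) (h d)"
  unfolding fract_lift_def
proof (rule someI2[of _ "Fract (h n) (h d)"], intro allI impI)
  interpret inj_ring_hom h by (fact h)
  fix n' d' assume d': "d' \<noteq> 0" and e: "Fract n d = Fract n' d'"
  hence "h n * h d' = h n' * h d" using d by (simp add: eq_fract flip: hom_mult)
  thus "Fract (h n) (h d) = Fract (h n') (h d')"
    using d d' by (simp add: eq_fract hom_eq_0_iff)
qed (use d in auto)

lemma inj_ring_hom_fract_lift: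
  assumes h: "inj_ring_hom h"
  shows "inj_ring_hom (fract_lift h)"
proof
  interpret inj_ring_hom h by (fact h)
  note lift = fract_lift_Fract[OF h]
  show "fract_lift h (x + y) = fract_lift h x + fract_lift h y" for x y
    by (cases x; cases y) (simp add: lift hom_eq_0_iff hom_add hom_mult)
  show "fract_lift h (x * y) = fract_lift h x * fract_lift h y" for x y
    by (cases x; cases y) (simp add: lift hom_eq_0_iff hom_mult)
  show "fract_lift h 1 = 1"
    using lift[of 1 1] by (simp add: hom_one One_fract_def)
  show "fract_lift h x = 0 \<Longrightarrow> x = 0" for x
    by (cases x) (simp add: lift hom_eq_0_iff Zero_fract_def eq_fract)
qed

lemma fract_lift_to_fract: "inj_ring_hom h \<Longrightarrow> fract_lift h (to_fract x) = to_fract (h x)"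
  by (simp add: to_fract_def fract_lift_Fract inj_ring_hom.hom_one)

section \<open>The \<open>\<int>\<^sup>2\<close>-action\<close>

lemma inj_ring_hom_tau_x: "u \<noteq> 0 \<Longrightarrow> inj_ring_hom (tau_x u)"
  unfolding tau_x_def by (intro inj_ring_hom_fract_lift inj_ring_hom_pcompose) simp

lemma tau_x_Fract:
  "u \<noteq> 0 \<Longrightarrow> d \<noteq> 0 \<Longrightarrow> tau_x u (Fract n d) = Fract (n \<circ>\<^sub>p [:0, u:]) (d \<circ>\<^sub>p [:0, u:])"
  unfolding tau_x_def by (intro fract_lift_Fract inj_ring_hom_pcompose) simp

lemma tau_x_tau_x:
  assumes "u \<noteq> 0" "v \<noteq> 0"
  shows "tau_x u (tau_x v c) = tau_x (u * v) c"
proof (cases c)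
  case (Fract n d)
  have "d \<circ>\<^sub>p [:0, v:] \<noteq> 0" using Fract assms(2) pcompose_eq_0[of d "[:0, v:]"] by auto
  moreover have "[:0, v:] \<circ>\<^sub>p [:0, u:] = [:0, u * v:]" by (simp add: pcompose_pCons mult.commute)
  ultimately show ?thesis using Fract assms by (simp add: tau_x_Fract flip: pcompose_assoc)
qed

lemma tau_x_1: "tau_x 1 c = c"
  by (cases c) (simp add: tau_x_Fract)

lemma tau_x_const: "u \<noteq> 0 \<Longrightarrow> tau_x u (to_fract [:k:]) = to_fract [:k:]"
  by (simp add: to_fract_def tau_x_Fract pcompose_1)

definition act :: "'a::field \<Rightarrow> int \<times> int \<Rightarrow> 'a poly fract poly \<Rightarrow> 'a poly fract poly" where
  "act q z p = map_poly (tau_x (q powi fst z)) (p \<circ>\<^sub>p [:of_int (snd z), 1:])"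

definition act_fract ::
  "'a::field \<Rightarrow> int \<times> int \<Rightarrow> 'a poly fract poly fract \<Rightarrow> 'a poly fract poly fract" where
  "act_fract q z = fract_lift (act q z)"

lemma inj_ring_hom_act:
  assumes "q \<noteq> 0" shows "inj_ring_hom (act q z)"
  unfolding act_def[abs_def]
  by (rule inj_ring_hom_comp, intro inj_ring_hom.inj_ring_hom_map_poly inj_ring_hom_tau_x,
      use assms in simp, rule inj_ring_hom_pcompose, simp)

lemma act_act:
  assumes q: "q \<noteq> 0"
  shows "act q z (act q w p) = act q (z + w) p"
proof -
  obtain i j k l where z: "z = (i, j)" and w: "w = (k, l)" by fastforce
  let ?t = "\<lambda>i. tau_x (q powi i)"
  have t: "inj_ring_hom (?t i)" for i by (rule inj_ring_hom_tau_x) (use q in simp)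
  have shift: "map_poly (?t i) [:of_int j, 1:] = [:of_int j, 1:]" for i j
    by (simp add: map_poly_pCons inj_ring_hom.hom_zero[OF t] inj_ring_hom.hom_of_int[OF t]
        inj_ring_hom.hom_one[OF t])
  have "act q z (act q w p) =
      map_poly (?t i) (map_poly (?t k) (p \<circ>\<^sub>p [:of_int l, 1:])) \<circ>\<^sub>p [:of_int j, 1:]"
    by (simp add: act_def z w inj_ring_hom.map_poly_pcompose_hom[OF t] shift)
  also have "map_poly (?t i) (map_poly (?t k) (p \<circ>\<^sub>p [:of_int l, 1:])) =
      map_poly (?t (i + k)) (p \<circ>\<^sub>p [:of_int l, 1:])"
    using q by (simp add: map_poly_map_poly inj_ring_hom.hom_zero[OF t] o_def tau_x_tau_x
        power_int_add)
  also have "\<dots> \<circ>\<^sub>p [:of_int j, 1:] =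
      map_poly (?t (i + k)) ((p \<circ>\<^sub>p [:of_int l, 1:]) \<circ>\<^sub>p [:of_int j, 1:])"
    by (simp add: inj_ring_hom.map_poly_pcompose_hom[OF t] shift)
  also have "(p \<circ>\<^sub>p [:of_int l, 1:]) \<circ>\<^sub>p [:of_int j, 1:] = p \<circ>\<^sub>p [:of_int (j + l), 1:]"
    by (simp add: pcompose_pCons add.commute flip: pcompose_assoc)
  finally show ?thesis by (simp add: act_def z w)
qed

lemma act_0: "act q 0 p = p"
  by (simp add: act_def tau_x_1[abs_def])

lemma act_uminus_act: "q \<noteq> 0 \<Longrightarrow> act q (- z) (act q z p) = p"
  by (simp add: act_act act_0)

lemma act_act_uminus: "q \<noteq> 0 \<Longrightarrow> act q z (act q (- z) p) = p"
  by (simp add: act_act act_0)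

lemma degree_act: "q \<noteq> 0 \<Longrightarrow> degree (act q z p) = degree p"
  unfolding act_def
  by (simp add: inj_ring_hom.degree_map_poly_hom inj_ring_hom_tau_x degree_pcompose)

lemma lead_coeff_act: "q \<noteq> 0 \<Longrightarrow> lead_coeff (act q z p) = tau_x (q powi fst z) (lead_coeff p)"
  unfolding act_def
  by (simp add: inj_ring_hom.lead_coeff_map_poly_hom inj_ring_hom_tau_x lead_coeff_comp)

lemma monic_act: "q \<noteq> 0 \<Longrightarrow> lead_coeff p = 1 \<Longrightarrow> lead_coeff (act q z p) = 1"
  by (simp add: lead_coeff_act inj_ring_hom.hom_one inj_ring_hom_tau_x)

lemma irreducible_act: "q \<noteq> 0 \<Longrightarrow> irreducible p \<Longrightarrow> irreducible (act q z p)"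
  by (rule irreducible_automorphism_image[where g = "act q (- z)"])
    (simp_all add: inj_ring_hom_act act_uminus_act act_act_uminus)

lemma inj_ring_hom_act_fract: "q \<noteq> 0 \<Longrightarrow> inj_ring_hom (act_fract q z)"
  unfolding act_fract_def by (intro inj_ring_hom_fract_lift inj_ring_hom_act)

lemma act_fract_Fract:
  "q \<noteq> 0 \<Longrightarrow> d \<noteq> 0 \<Longrightarrow> act_fract q z (Fract n d) = Fract (act q z n) (act q z d)"
  unfolding act_fract_def by (intro fract_lift_Fract inj_ring_hom_act)

lemma tauK_eq_act_fract: "tauK q = act_fract q (1, 0)"
proof -
  have "tau_xy q = act q (1, 0)" by (simp add: fun_eq_iff act_def tau_xy_def)
  thus ?thesis by (simp add: tauK_def act_fract_def)
qed

lemma sigK_eq_act_fract: "sigK = act_fract q (0, 1)"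
proof -
  have "(\<lambda>P. P \<circ>\<^sub>p [:1, 1:]) = act q (0, 1)" by (simp add: fun_eq_iff act_def tau_x_1[abs_def])
  thus ?thesis by (simp add: sigK_def act_fract_def)
qed

lemma exact_iff_act_fract:
  "exact q F \<longleftrightarrow> (\<exists>g h. F = (act_fract q (1, 0) g - g) + (act_fract q (0, 1) h - h))"
  by (simp add: exact_def DeltaX_def DeltaY_def tauK_eq_act_fract sigK_eq_act_fract[of q])

lemma DeltaX_to_fract: "q \<noteq> 0 \<Longrightarrow> DeltaX q (to_fract b) = to_fract (act q (1, 0) b - b)"
  by (simp add: DeltaX_def tauK_eq_act_fract act_fract_def fract_lift_to_fract inj_ring_hom_act)

section \<open>Polynomials over a field\<close>

lemma field_poly_bezout:
  fixes A B :: "'b::field poly"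
  shows "\<exists>u v g. u * A + v * B = g \<and> g dvd A \<and> g dvd B"
proof (induction "degree B" arbitrary: A B rule: less_induct)
  case less
  show ?case
  proof (cases "B = 0 \<or> A mod B = 0")
    case True
    thus ?thesis
    proof
      assume "B = 0" thus ?thesis by (intro exI[of _ 1] exI[of _ 0] exI[of _ A]) simp
    next
      assume "A mod B = 0" thus ?thesis
        by (intro exI[of _ 0] exI[of _ 1] exI[of _ B]) (simp add: mod_0_imp_dvd)
    qed
  next
    case False
    hence "degree (A mod B) < degree B" by (simp add: degree_mod_less')
    from less[OF this, of B] obtain u v g where
      g: "u * B + v * (A mod B) = g" "g dvd B" "g dvd A mod B" by blast
    have "v * A + (u - v * (A div B)) * B = u * B + v * (A mod B)"
      by (simp add: algebra_simps flip: minus_div_mult_eq_mod)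
    moreover have "g dvd A" using g(2,3) by (metis div_mult_mod_eq dvd_add dvd_mult)
    ultimately show ?thesis using g by blast
  qed
qed

lemma field_poly_inverse_mod:
  fixes Q E :: "'b::field poly"
  assumes irr: "irreducible Q" and "\<not> Q dvd E"
  shows "\<exists>u. Q dvd u * E - 1"
proof -
  obtain u v g where g: "u * E + v * Q = g" "g dvd E" "g dvd Q"
    using field_poly_bezout[of E Q] by blast
  from g(3) obtain w where w: "Q = g * w" by (auto elim: dvdE)
  have "\<not> w dvd 1"
  proof
    assume "w dvd 1"
    hence "Q dvd g" using w by (metis dvd_mult_unit_iff dvd_refl)
    thus False using g(2) \<open>\<not> Q dvd E\<close> dvd_trans by blast
  qed
  hence "g dvd 1" using irreducibleD[OF irr w] by blast
  then obtain k where k: "1 = g * k" by (auto elim: dvdE)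
  have "(k * u) * E + (k * v) * Q = k * (u * E + v * Q)" by (simp add: algebra_simps)
  also have "\<dots> = 1" using g(1) k by (simp add: mult.commute)
  finally have "(k * u) * E - 1 = Q * - (k * v)" by (simp add: algebra_simps eq_diff_eq)
  thus ?thesis by (intro exI[of _ "k * u"]) simp
qed

lemma Fract_coprime_representation:
  fixes c :: "'b::field poly fract"
  obtains N D u v where "D \<noteq> 0" "c = Fract N D" "u * N + v * D = 1"
proof -
  have ex: "\<exists>n N D. D \<noteq> 0 \<and> c = Fract N D \<and> degree D = n" by (cases c) auto
  define n where "n = (LEAST n. \<exists>N D. D \<noteq> 0 \<and> c = Fract N D \<and> degree D = n)"
  from LeastI_ex[OF ex] obtain N D where ND: "D \<noteq> 0" "c = Fract N D" "degree D = n"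
    unfolding n_def by blast
  have minimal: "degree D \<le> degree D'" if "D' \<noteq> 0" "c = Fract N' D'" for N' D'
    unfolding ND(3) n_def by (rule Least_le) (use that in blast)
  obtain u v g where g: "u * N + v * D = g" "g dvd N" "g dvd D" using field_poly_bezout by blast
  obtain N' D' where N': "N = g * N'" and D': "D = g * D'" using g(2,3) by (auto elim!: dvdE)
  have g0: "g \<noteq> 0" and D'0: "D' \<noteq> 0" using ND(1) D' by auto
  have "c = Fract N' D'" using ND(2) N' D' g0 by (simp add: mult_fract_cancel)
  hence "degree D \<le> degree D'" using minimal D'0 by blast
  moreover have "degree D = degree g + degree D'" using D' g0 D'0 by (simp add: degree_mult_eq)
  ultimately have "is_unit g" using g0 is_unit_iff_degree by fastforce
  then obtain k where k: "1 = g * k" by (auto elim: dvdE)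
  have "(k * u) * N + (k * v) * D = k * (u * N + v * D)" by (simp add: algebra_simps)
  also have "\<dots> = 1" using g(1) k by (simp add: mult.commute)
  finally have "(k * u) * N + (k * v) * D = 1" .
  thus ?thesis using that ND(1,2) by blast
qed

lemma irreducible_field_poly_degree:
  assumes "irreducible (Q::'b::field poly)"
  shows "degree Q > 0"
proof -
  have "Q \<noteq> 0" "\<not> is_unit Q" using assms by (auto simp: irreducible_def)
  thus ?thesis using is_unit_iff_degree[of Q] by auto
qed

lemma not_dvd_lower_degree:
  fixes Q s :: "'b::field poly"
  assumes "degree s < degree Q" "s \<noteq> 0"
  shows "\<not> Q dvd s"
proof
  assume "Q dvd s"
  hence "degree Q \<le> degree s" using assms(2) by (rule dvd_imp_degree_le)
  thus False using assms(1) by simp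
qed

lemma power_factor_decompose:
  fixes Q D :: "'b::field poly"
  assumes "degree Q > 0" "D \<noteq> 0"
  shows "\<exists>e E. D = Q ^ e * E \<and> E \<noteq> 0 \<and> \<not> Q dvd E"
  using assms(2)
proof (induction "degree D" arbitrary: D rule: less_induct)
  case less
  show ?case
  proof (cases "Q dvd D")
    case False thus ?thesis using less.prems by (intro exI[of _ 0] exI[of _ D]) simp
  next
    case True
    then obtain D' where D': "D = Q * D'" by (auto elim: dvdE)
    hence "D' \<noteq> 0" "Q \<noteq> 0" using less.prems assms(1) by auto
    hence "degree D' < degree D" using D' assms(1) by (simp add: degree_mult_eq)
    from less.hyps[OF this \<open>D' \<noteq> 0\<close>] obtain e E where "D' = Q ^ e * E" "E \<noteq> 0" "\<not> Q dvd E"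
      by blast
    thus ?thesis using D' by (intro exI[of _ "Suc e"] exI[of _ E]) (simp add: mult.assoc)
  qed
qed

lemma monic_irreducible_dvd_imp_eq:
  fixes Q Q' :: "'b::field poly"
  assumes "lead_coeff Q = 1" "lead_coeff Q' = 1" "irreducible Q" "irreducible Q'" "Q dvd Q'"
  shows "Q = Q'"
proof -
  from assms(5) obtain w where w: "Q' = Q * w" by (auto elim: dvdE)
  hence "w dvd 1" using irreducibleD[OF assms(4) w] assms(3) by (auto simp: irreducible_def)
  moreover have "w \<noteq> 0" using w assms(4) by auto
  ultimately have "degree w = 0" using is_unit_iff_degree by blast
  moreover have "lead_coeff w = 1" using w assms(1,2) by (simp add: lead_coeff_mult)
  ultimately have "w = 1" by (metis degree_0_id one_pCons)
  thus ?thesis using w by simp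
qed

lemma finite_monic_irreducible_divisors:
  fixes D :: "'b::field poly"
  assumes "D \<noteq> 0"
  shows "finite {Q. lead_coeff Q = 1 \<and> irreducible Q \<and> Q dvd D}"
  using assms
proof (induction "degree D" arbitrary: D rule: less_induct)
  case less
  show ?case
  proof (cases "\<exists>Q0. lead_coeff Q0 = 1 \<and> irreducible Q0 \<and> Q0 dvd D")
    case False
    hence "{Q. lead_coeff Q = 1 \<and> irreducible Q \<and> Q dvd D} = {}" by blast
    thus ?thesis by (metis finite.emptyI)
  next
    case True
    then obtain Q0 D' where Q0: "lead_coeff Q0 = 1" "irreducible Q0" and D': "D = Q0 * D'"
      by (auto elim!: dvdE)
    hence "D' \<noteq> 0" "Q0 \<noteq> 0" "degree Q0 > 0" using less.prems irreducible_field_poly_degree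
      by fastforce+
    hence "degree D' < degree D" using D' by (simp add: degree_mult_eq)
    from less.hyps[OF this \<open>D' \<noteq> 0\<close>]
    have "finite (insert Q0 {Q. lead_coeff Q = 1 \<and> irreducible Q \<and> Q dvd D'})" by simp
    moreover have "{Q. lead_coeff Q = 1 \<and> irreducible Q \<and> Q dvd D} \<subseteq>
        insert Q0 {Q. lead_coeff Q = 1 \<and> irreducible Q \<and> Q dvd D'}"
    proof
      fix Q assume "Q \<in> {Q. lead_coeff Q = 1 \<and> irreducible Q \<and> Q dvd D}"
      hence Q: "lead_coeff Q = 1" "irreducible Q" "Q dvd Q0 * D'" using D' by auto
      hence "Q dvd Q0 \<or> Q dvd D'"
        using field_poly_irreducible_imp_prime prime_elem_dvd_multD by blast
      thus "Q \<in> insert Q0 {Q. lead_coeff Q = 1 \<and> irreducible Q \<and> Q dvd D'}"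
        using monic_irreducible_dvd_imp_eq[OF Q(1) Q0(1) Q(2) Q0(2)] Q by auto
    qed
    ultimately show ?thesis by (rule finite_subset[rotated])
  qed
qed

section \<open>Partial fractions at an irreducible polynomial\<close>

definition regular_at :: "'b::field poly \<Rightarrow> 'b poly fract \<Rightarrow> bool" where
  "regular_at Q G \<longleftrightarrow> (\<exists>N V. V \<noteq> 0 \<and> \<not> Q dvd V \<and> G = Fract N V)"

lemma regular_at_Fract: "V \<noteq> 0 \<Longrightarrow> \<not> Q dvd V \<Longrightarrow> regular_at Q (Fract N V)"
  unfolding regular_at_def by blast

lemma regular_at_0: "\<not> Q dvd 1 \<Longrightarrow> regular_at Q 0"
  unfolding regular_at_def by (intro exI[of _ 0] exI[of _ 1]) (simp add: Zero_fract_def)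

lemma regular_at_add:
  assumes p: "prime_elem Q" and "regular_at Q F" "regular_at Q G" shows "regular_at Q (F + G)"
proof -
  from assms(2) obtain N V where 1: "V \<noteq> 0" "\<not> Q dvd V" "F = Fract N V"
    by (auto simp: regular_at_def)
  from assms(3) obtain N' V' where 2: "V' \<noteq> 0" "\<not> Q dvd V'" "G = Fract N' V'"
    by (auto simp: regular_at_def)
  have "\<not> Q dvd V * V'" using 1 2 p prime_elem_dvd_mult_iff by blast
  moreover have "F + G = Fract (N * V' + N' * V) (V * V')" using 1 2 by simp
  ultimately show ?thesis using 1 2 by (simp add: regular_at_Fract)
qed

lemma regular_at_uminus: "regular_at Q F \<Longrightarrow> regular_at Q (- F)"
  unfolding regular_at_def by (metis minus_fract)

lemma regular_at_diff: "prime_elem Q \<Longrightarrow> regular_at Q F \<Longrightarrow> regular_at Q G \<Longrightarrow> regular_at Q (F - G)"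
  using regular_at_add[of Q F "- G"] regular_at_uminus[of Q G] by simp

definition polar_part :: "'b::field poly \<Rightarrow> (nat \<Rightarrow> 'b poly) \<Rightarrow> nat \<Rightarrow> 'b poly fract" where
  "polar_part Q r e = (\<Sum>j\<in>{1..e}. Fract (r j) (Q ^ j))"

text \<open>\<open>r j\<close> is the numerator of \<open>1 / Q\<^sup>j\<close> in the \<open>Q\<close>-adic partial fraction expansion of \<open>F\<close>.\<close>

definition polar_decomp :: "'b::field poly \<Rightarrow> 'b poly fract \<Rightarrow> nat \<Rightarrow> (nat \<Rightarrow> 'b poly) \<Rightarrow> bool" where
  "polar_decomp Q F e r \<longleftrightarrow> (\<forall>j. degree (r j) < degree Q) \<and> r 0 = 0 \<and> (\<forall>j>e. r j = 0)
      \<and> regular_at Q (F - polar_part Q r e)"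

lemma polar_part_pad:
  assumes "\<forall>j>e. r j = 0" "e \<le> E" shows "polar_part Q r E = polar_part Q r e"
  unfolding polar_part_def using assms
  by (intro sum.mono_neutral_right) (auto simp: fract_collapse)

lemma Fract_mult_cancel_right: "D \<noteq> 0 \<Longrightarrow> Fract (a * D) (b * D) = Fract a b"
  by (metis mult.commute mult_fract_cancel)

lemma Fract_add_same: assumes "D \<noteq> 0" shows "Fract (a + b) D = Fract a D + Fract b D"
proof -
  have "Fract a D + Fract b D = Fract ((a + b) * D) (D * D)" using assms
    by (simp add: distrib_right)
  also have "\<dots> = Fract (a + b) D" by (rule Fract_mult_cancel_right[OF assms])
  finally show ?thesis by simp
qed

lemma Fract_diff_same: assumes "D \<noteq> 0" shows "Fract (a - b) D = Fract a D - Fract b D"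
proof -
  have "Fract a D - Fract b D = Fract ((a - b) * D) (D * D)" using assms
    by (simp add: left_diff_distrib)
  also have "\<dots> = Fract (a - b) D" by (rule Fract_mult_cancel_right[OF assms])
  finally show ?thesis by simp
qed

lemma sum_Fract_same: "D \<noteq> 0 \<Longrightarrow> (\<Sum>j\<in>A. Fract (f j) D) = Fract (\<Sum>j\<in>A. f j) D"
proof (induction A rule: infinite_finite_induct)
  case (infinite A) thus ?case by (simp add: fract_collapse)
next
  case empty thus ?case by (simp add: fract_collapse)
next
  case (insert x F)
  thus ?case by (simp del: add_fract add: Fract_add_same)
qed

lemma polar_part_eq_Fract:
  assumes "Q \<noteq> 0"
  shows "polar_part Q s E = Fract (\<Sum>j\<in>{1..E}. s j * Q ^ (E - j)) (Q ^ E)"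
proof -
  have "polar_part Q s E = (\<Sum>j\<in>{1..E}. Fract (s j * Q ^ (E - j)) (Q ^ E))"
    unfolding polar_part_def
  proof (rule sum.cong[OF refl])
    fix j assume "j \<in> {1..E}"
    hence "E = (E - j) + j" by simp
    hence "Q ^ E = Q ^ (E - j) * Q ^ j" by (metis power_add)
    hence "Fract (s j * Q ^ (E - j)) (Q ^ E) = Fract (Q ^ (E - j) * s j) (Q ^ (E - j) * Q ^ j)"
      by (simp add: mult.commute)
    also have "\<dots> = Fract (s j) (Q ^ j)" using assms by (intro mult_fract_cancel) simp
    finally show "Fract (s j) (Q ^ j) = Fract (s j * Q ^ (E - j)) (Q ^ E)" by simp
  qed
  also have "\<dots> = Fract (\<Sum>j\<in>{1..E}. s j * Q ^ (E - j)) (Q ^ E)"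
    using assms by (simp add: sum_Fract_same)
  finally show ?thesis .
qed

lemma not_dvd_polar_numerator:
  fixes Q :: "'b::field poly"
  assumes "\<forall>j. degree (s j) < degree Q" "s (Suc E) \<noteq> 0"
  shows "\<not> Q dvd (\<Sum>j\<in>{1..Suc E}. s j * Q ^ (Suc E - j))"
proof
  let ?W' = "\<Sum>j\<in>{1..E}. s j * Q ^ (E - j)"
  have "(\<Sum>j\<in>{1..Suc E}. s j * Q ^ (Suc E - j)) =
      s (Suc E) + (\<Sum>j\<in>{1..E}. s j * Q ^ (Suc E - j))"
    by (simp add: add.commute)
  also have "(\<Sum>j\<in>{1..E}. s j * Q ^ (Suc E - j)) = (\<Sum>j\<in>{1..E}. Q * (s j * Q ^ (E - j)))"
    by (rule sum.cong) (auto simp: Suc_diff_le)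
  also have "\<dots> = Q * ?W'" by (simp add: sum_distrib_left)
  finally have W: "(\<Sum>j\<in>{1..Suc E}. s j * Q ^ (Suc E - j)) = s (Suc E) + Q * ?W'" .
  assume "Q dvd (\<Sum>j\<in>{1..Suc E}. s j * Q ^ (Suc E - j))"
  hence "Q dvd s (Suc E)" unfolding W by (simp add: dvd_add_left_iff)
  thus False using not_dvd_lower_degree[OF assms(1)[rule_format] assms(2)] by blast
qed

lemma regular_polar_part_eq_0:
  fixes Q :: "'b::field poly"
  assumes p: "prime_elem Q" and dQ: "degree Q > 0"
  shows "(\<forall>j. degree (s j) < degree Q) \<Longrightarrow> s 0 = 0 \<Longrightarrow> regular_at Q (polar_part Q s E) \<Longrightarrow>
    \<forall>j\<le>E. s j = 0"
proof (induction E)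
  case 0 thus ?case by simp
next
  case (Suc E)
  show ?case
  proof (cases "s (Suc E) = 0")
    case True
    have "polar_part Q s (Suc E) = polar_part Q s E"
      unfolding polar_part_def using True by (simp add: fract_collapse)
    with Suc have "\<forall>j\<le>E. s j = 0" by simp
    with True show ?thesis using le_Suc_eq by blast
  next
    case False
    have Q0: "Q \<noteq> 0" using dQ by auto
    let ?W = "\<Sum>j\<in>{1..Suc E}. s j * Q ^ (Suc E - j)"
    have ndW: "\<not> Q dvd ?W" using Suc.prems(1) False by (rule not_dvd_polar_numerator)
    from Suc.prems(3) obtain N V
      where NV: "V \<noteq> 0" "\<not> Q dvd V" "polar_part Q s (Suc E) = Fract N V"
      by (auto simp: regular_at_def)
    have "Fract ?W (Q ^ Suc E) = Fract N V"
      using polar_part_eq_Fract[OF Q0, of s "Suc E"] NV(3) by simp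
    hence e: "?W * V = N * Q ^ Suc E" using NV(1) Q0 eq_fract(1)[of "Q ^ Suc E" V ?W N] by simp
    have "Q dvd N * Q ^ Suc E" by simp
    hence "Q dvd ?W * V" by (simp only: e)
    hence "Q dvd ?W \<or> Q dvd V" by (rule prime_elem_dvd_multD[OF p])
    hence False using ndW NV(2) by blast
    thus ?thesis ..
  qed
qed

lemma polar_decomp_unique:
  fixes Q :: "'b::field poly"
  assumes p: "prime_elem Q" and dQ: "degree Q > 0"
    and d1: "polar_decomp Q F e r" and d2: "polar_decomp Q F e' r'"
  shows "r = r'"
proof -
  have Q0: "Q \<noteq> 0" using dQ by auto
  define E where "E = max e e'"
  have e1: "polar_part Q r E = polar_part Q r e" using d1
    by (intro polar_part_pad) (auto simp: polar_decomp_def E_def)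
  have e2: "polar_part Q r' E = polar_part Q r' e'" using d2
    by (intro polar_part_pad) (auto simp: polar_decomp_def E_def)
  define s where "s j = r j - r' j" for j
  have "polar_part Q s E = polar_part Q r E - polar_part Q r' E"
    unfolding polar_part_def s_def using Q0
      by (simp del: diff_fract add: sum_subtractf[symmetric] Fract_diff_same)
  also have "\<dots> = (F - polar_part Q r' e') - (F - polar_part Q r e)" using e1 e2 by simp
  finally have eq: "polar_part Q s E = (F - polar_part Q r' e') - (F - polar_part Q r e)" .
  have "regular_at Q ((F - polar_part Q r' e') - (F - polar_part Q r e))"
    by (rule regular_at_diff[OF p]) (use d1 d2 in \<open>auto simp: polar_decomp_def\<close>)
  hence reg: "regular_at Q (polar_part Q s E)" unfolding eq .
  have deg: "\<forall>j. degree (s j) < degree Q" using d1 d2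
    by (auto simp: polar_decomp_def s_def intro: le_less_trans[OF degree_diff_le_max])
  have s0: "s 0 = 0" using d1 d2 by (simp add: polar_decomp_def s_def)
  have "\<forall>j\<le>E. s j = 0" by (rule regular_polar_part_eq_0[OF p dQ deg s0 reg])
  moreover have "\<forall>j>E. s j = 0" using d1 d2 by (auto simp: polar_decomp_def s_def E_def)
  ultimately have "\<forall>j. s j = 0" using not_le by blast
  thus ?thesis by (auto simp: s_def fun_eq_iff)
qed

text \<open>Peeling off the top-order pole: \<open>\<rho>\<close> is \<open>N\<close> times the inverse of \<open>E\<close> modulo \<open>Q\<close>.\<close>

lemma Fract_split_pole:
  fixes Q :: "'b::field poly"
  assumes irr: "irreducible Q" and E: "E \<noteq> 0" "\<not> Q dvd E"
  shows "\<exists>\<rho> N'. degree \<rho> < degree Q \<and>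
    Fract N (Q ^ Suc e * E) - Fract \<rho> (Q ^ Suc e) = Fract N' (Q ^ e * E)"
proof -
  have dQ: "degree Q > 0" by (rule irreducible_field_poly_degree[OF irr])
  hence Q0: "Q \<noteq> 0" by auto
  obtain u where u: "Q dvd u * E - 1" using field_poly_inverse_mod[OF irr E(2)] by blast
  define \<rho> where "\<rho> = (N * u) mod Q"
  have deg\<rho>: "degree \<rho> < degree Q"
    using dQ degree_mod_less'[OF Q0, of "N * u"] by (cases "\<rho> = 0") (auto simp: \<rho>_def)
  have "N - \<rho> * E = - N * (u * E - 1) + Q * ((N * u div Q) * E)"
    by (simp add: \<rho>_def algebra_simps flip: minus_div_mult_eq_mod)
  moreover have "Q dvd - N * (u * E - 1) + Q * ((N * u div Q) * E)"
    using u by (intro dvd_add) auto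
  ultimately obtain N' where N': "N - \<rho> * E = Q * N'" by (auto elim: dvdE)
  have QE0: "Q ^ Suc e * E \<noteq> 0" using Q0 E by simp
  have "Fract \<rho> (Q ^ Suc e) = Fract (\<rho> * E) (Q ^ Suc e * E)"
    using E by (simp add: Fract_mult_cancel_right)
  hence "Fract N (Q ^ Suc e * E) - Fract \<rho> (Q ^ Suc e) = Fract (N - \<rho> * E) (Q ^ Suc e * E)"
    using Fract_diff_same[OF QE0, of N "\<rho> * E"] by simp
  also have "\<dots> = Fract (Q * N') (Q * (Q ^ e * E))" by (simp add: N' mult.assoc)
  also have "\<dots> = Fract N' (Q ^ e * E)" using Q0 by (rule mult_fract_cancel)
  finally show ?thesis using deg\<rho> by blast
qed

lemma polar_decomp_Fract:
  fixes Q :: "'b::field poly"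
  assumes irr: "irreducible Q"
  shows "E \<noteq> 0 \<Longrightarrow> \<not> Q dvd E \<Longrightarrow> \<exists>r. polar_decomp Q (Fract N (Q ^ e * E)) e r"
proof (induction e arbitrary: N)
  case 0
  have "polar_decomp Q (Fract N (Q ^ 0 * E)) 0 (\<lambda>_. 0)"
    unfolding polar_decomp_def polar_part_def using 0 irreducible_field_poly_degree[OF irr]
    by (auto intro!: regular_at_Fract)
  thus ?case by blast
next
  case (Suc e)
  obtain \<rho> N' where \<rho>: "degree \<rho> < degree Q"
    and F: "Fract N (Q ^ Suc e * E) - Fract \<rho> (Q ^ Suc e) = Fract N' (Q ^ e * E)"
    using Fract_split_pole[OF irr Suc.prems] by blast
  from Suc.IH[OF Suc.prems] obtain r' where r': "polar_decomp Q (Fract N' (Q ^ e * E)) e r'"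
    by blast
  define r where "r = r'(Suc e := \<rho>)"
  have "polar_part Q r (Suc e) = polar_part Q r e + Fract (r (Suc e)) (Q ^ Suc e)"
    unfolding polar_part_def by (simp add: sum.cl_ivl_Suc)
  also have "polar_part Q r e = polar_part Q r' e"
    unfolding polar_part_def r_def by (rule sum.cong) auto
  finally have "polar_part Q r (Suc e) = polar_part Q r' e + Fract \<rho> (Q ^ Suc e)"
    by (simp add: r_def fun_upd_def)
  hence "Fract N (Q ^ Suc e * E) - polar_part Q r (Suc e) =
      Fract N' (Q ^ e * E) - polar_part Q r' e"
    by (simp only: F[symmetric]) (simp add: algebra_simps)
  hence "polar_decomp Q (Fract N (Q ^ Suc e * E)) (Suc e) r"
    using r' \<rho> unfolding polar_decomp_def r_def by auto
  thus ?case by blast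
qed

lemma polar_decomp_exists:
  fixes Q :: "'b::field poly"
  assumes irr: "irreducible Q"
  shows "\<exists>e r. polar_decomp Q F e r"
proof (cases F)
  fix N D assume F: "F = Fract N D" "D \<noteq> 0"
  obtain e E where "D = Q ^ e * E" "E \<noteq> 0" "\<not> Q dvd E"
    using power_factor_decompose[OF irreducible_field_poly_degree[OF irr] F(2)] by blast
  thus ?thesis using polar_decomp_Fract[OF irr] F by metis
qed

definition polar_coeff :: "'b::field poly \<Rightarrow> 'b poly fract \<Rightarrow> nat \<Rightarrow> 'b poly" where
  "polar_coeff Q F = (THE r. \<exists>e. polar_decomp Q F e r)"

lemma polar_coeff_eqI:
  assumes irr: "irreducible Q" and d: "polar_decomp Q F e r"
  shows "polar_coeff Q F = r"
  unfolding polar_coeff_def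
proof (rule the_equality)
  show "\<exists>e. polar_decomp Q F e r" using d by blast
  fix r' assume "\<exists>e. polar_decomp Q F e r'"
  then obtain e' where "polar_decomp Q F e' r'" by blast
  thus "r' = r"
    using polar_decomp_unique[OF field_poly_irreducible_imp_prime[OF irr]
        irreducible_field_poly_degree[OF irr] _ d] by blast
qed

lemma polar_decomp_polar_coeff: "irreducible Q \<Longrightarrow> \<exists>e. polar_decomp Q F e (polar_coeff Q F)"
  using polar_decomp_exists[of Q F] polar_coeff_eqI[of Q F] by blast

lemma polar_decomp_add:
  fixes Q :: "'b::field poly"
  assumes p: "prime_elem Q" and d1: "polar_decomp Q F e r" and d2: "polar_decomp Q G e' r'"
  shows "polar_decomp Q (F + G) (max e e') (\<lambda>j. r j + r' j)"
proof -
  have Q0: "Q \<noteq> 0" using p by auto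
  define E where "E = max e e'"
  have e1: "polar_part Q r E = polar_part Q r e" using d1
    by (intro polar_part_pad) (auto simp: polar_decomp_def E_def)
  have e2: "polar_part Q r' E = polar_part Q r' e'" using d2
    by (intro polar_part_pad) (auto simp: polar_decomp_def E_def)
  have "polar_part Q (\<lambda>j. r j + r' j) E = polar_part Q r E + polar_part Q r' E"
    unfolding polar_part_def using Q0 by (simp del: add_fract add: sum.distrib Fract_add_same)
  hence eq: "F + G - polar_part Q (\<lambda>j. r j + r' j) E =
      (F - polar_part Q r e) + (G - polar_part Q r' e')"
    using e1 e2 by (simp add: algebra_simps)
  have "regular_at Q ((F - polar_part Q r e) + (G - polar_part Q r' e'))"
    by (rule regular_at_add[OF p]) (use d1 d2 in \<open>auto simp: polar_decomp_def\<close>)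
  moreover have "\<forall>j. degree (r j + r' j) < degree Q" using d1 d2
    by (auto simp: polar_decomp_def intro: le_less_trans[OF degree_add_le_max])
  ultimately show ?thesis using d1 d2 unfolding polar_decomp_def E_def[symmetric] eq
    by (auto simp: E_def)
qed

lemma polar_coeff_add:
  "irreducible Q \<Longrightarrow> polar_coeff Q (F + G) j = polar_coeff Q F j + polar_coeff Q G j"
proof -
  assume irr: "irreducible Q"
  obtain e e' where "polar_decomp Q F e (polar_coeff Q F)" "polar_decomp Q G e' (polar_coeff Q G)"
    using polar_decomp_polar_coeff[OF irr] by blast
  from polar_decomp_add[OF field_poly_irreducible_imp_prime[OF irr] this]
  have "polar_coeff Q (F + G) = (\<lambda>j. polar_coeff Q F j + polar_coeff Q G j)"
    by (rule polar_coeff_eqI[OF irr])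
  thus ?thesis by simp
qed

lemma polar_coeff_regular:
  assumes irr: "irreducible Q" and r: "regular_at Q F"
  shows "polar_coeff Q F = (\<lambda>_. 0)"
proof (rule polar_coeff_eqI[OF irr])
  show "polar_decomp Q F 0 (\<lambda>_. 0)" unfolding polar_decomp_def polar_part_def
    using r irreducible_field_poly_degree[OF irr] by simp
qed

lemma polar_coeff_Fract_power:
  assumes irr: "irreducible Q" and da: "degree a < degree Q" and m: "m > 0"
  shows "polar_coeff Q (Fract a (Q ^ m)) = (\<lambda>_. 0)(m := a)"
proof (rule polar_coeff_eqI[OF irr])
  have "polar_part Q ((\<lambda>_. 0)(m := a)) m = (\<Sum>j\<in>{1..m}. if j = m then Fract a (Q ^ j) else 0)"
    unfolding polar_part_def by (rule sum.cong) (auto simp: fract_collapse)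
  also have "\<dots> = Fract a (Q ^ m)" using m by simp
  finally have "Fract a (Q ^ m) - polar_part Q ((\<lambda>_. 0)(m := a)) m = 0" by simp
  thus "polar_decomp Q (Fract a (Q ^ m)) m ((\<lambda>_. 0)(m := a))"
    unfolding polar_decomp_def
      using m da irreducible_field_poly_degree[OF irr] regular_at_0[OF irreducible_not_unit[OF irr]]
      by auto
qed

lemma regular_at_transport:
  assumes h: "inj_ring_hom h" and g: "inj_ring_hom g" and hg: "\<And>x. g (h x) = x"
    and r: "regular_at Q F"
  shows "regular_at (h Q) (fract_lift h F)"
proof -
  from r obtain N V where NV: "V \<noteq> 0" "\<not> Q dvd V" "F = Fract N V" by (auto simp: regular_at_def)
  have "\<not> h Q dvd h V"
  proof
    assume "h Q dvd h V"
    hence "g (h Q) dvd g (h V)" by (rule inj_ring_hom.hom_dvd[OF g])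
    thus False using NV hg by simp
  qed
  moreover have "h V \<noteq> 0" using NV inj_ring_hom.hom_eq_0_iff[OF h] by auto
  ultimately show ?thesis using NV by (simp add: fract_lift_Fract[OF h] regular_at_Fract)
qed

lemma polar_decomp_transport:
  fixes h :: "'b::field poly \<Rightarrow> 'b poly"
  assumes h: "inj_ring_hom h" and g: "inj_ring_hom g" and hg: "\<And>x. g (h x) = x"
    and dh: "\<And>p. degree (h p) = degree p" and Q0: "Q \<noteq> 0"
    and d: "polar_decomp Q F e r"
  shows "polar_decomp (h Q) (fract_lift h F) e (\<lambda>j. h (r j))"
proof -
  have fl: "inj_ring_hom (fract_lift h)" by (rule inj_ring_hom_fract_lift[OF h])
  have "fract_lift h (polar_part Q r e) = polar_part (h Q) (\<lambda>j. h (r j)) e"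
    unfolding polar_part_def using Q0
    by (simp add: inj_ring_hom.hom_sum[OF fl] fract_lift_Fract[OF h] inj_ring_hom.hom_power[OF h])
  hence eq: "fract_lift h (F - polar_part Q r e) =
      fract_lift h F - polar_part (h Q) (\<lambda>j. h (r j)) e"
    by (simp add: inj_ring_hom.hom_diff[OF fl])
  have "regular_at (h Q) (fract_lift h (F - polar_part Q r e))"
    by (rule regular_at_transport[OF h g hg]) (use d in \<open>simp add: polar_decomp_def\<close>)
  thus ?thesis using d unfolding polar_decomp_def eq by (simp add: dh inj_ring_hom.hom_zero[OF h])
qed

lemma polar_coeff_transport:
  fixes h :: "'b::field poly \<Rightarrow> 'b poly"
  assumes h: "inj_ring_hom h" and g: "inj_ring_hom g"
    and hg: "\<And>x. g (h x) = x" and gh: "\<And>x. h (g x) = x"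
    and dh: "\<And>p. degree (h p) = degree p" and irr: "irreducible Q"
  shows "polar_coeff (h Q) (fract_lift h F) j = h (polar_coeff Q F j)"
proof -
  obtain e where "polar_decomp Q F e (polar_coeff Q F)" using polar_decomp_polar_coeff[OF irr]
    by blast
  from polar_decomp_transport[OF h g hg dh _ this] have
    "polar_decomp (h Q) (fract_lift h F) e (\<lambda>j. h (polar_coeff Q F j))" using irr
      by (auto simp: irreducible_def)
  from polar_coeff_eqI[OF irreducible_automorphism_image[OF h g hg gh irr] this] show ?thesis
    by simp
qed

lemma polar_coeff_nonzero_imp_dvd:
  assumes irr: "irreducible Q" and F: "F = Fract N D" "D \<noteq> 0" and nz: "polar_coeff Q F j \<noteq> 0"
  shows "Q dvd D"
proof (rule ccontr)
  assume "\<not> Q dvd D"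
  hence "regular_at Q F" using F by (simp add: regular_at_Fract)
  thus False using polar_coeff_regular[OF irr] nz by simp
qed

lemma finite_polar_support:
  fixes F :: "'b::field poly fract"
  shows "finite {Q. lead_coeff Q = 1 \<and> irreducible Q \<and> polar_coeff Q F j \<noteq> 0}"
proof (cases F)
  fix N D assume F: "F = Fract N D" "D \<noteq> 0"
  have "{Q. lead_coeff Q = 1 \<and> irreducible Q \<and> polar_coeff Q F j \<noteq> 0} \<subseteq>
      {Q. lead_coeff Q = 1 \<and> irreducible Q \<and> Q dvd D}"
    using polar_coeff_nonzero_imp_dvd[OF _ F] by blast
  thus ?thesis using finite_monic_irreducible_divisors[OF F(2)] finite_subset by blast
qed

section \<open>Orbital residues\<close>

lemma polar_coeff_act:
  assumes "q \<noteq> 0" "irreducible Q"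
  shows "polar_coeff (act q z Q) (act_fract q z F) j = act q z (polar_coeff Q F j)"
  unfolding act_fract_def
  by (rule polar_coeff_transport[where g = "act q (- z)"])
    (simp_all add: assms inj_ring_hom_act act_uminus_act act_act_uminus degree_act)

lemma Sum_any_shift:
  fixes s :: "'i::ab_group_add \<Rightarrow> 'r::comm_monoid_add"
  shows "Sum_any (\<lambda>z. s (z - w)) = Sum_any s"
proof -
  have "bij (\<lambda>z::'i. z - w)" by (rule bijI') (auto intro: exI[of _ "_ + w"])
  thus ?thesis by (rule Sum_any.reindex_cong[symmetric]) (simp add: o_def)
qed

lemma Sum_any_inj_ring_hom:
  fixes s :: "'i \<Rightarrow> 'r::comm_ring_1"
  assumes h: "inj_ring_hom h" and fin: "finite {z. s z \<noteq> 0}"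
  shows "Sum_any (\<lambda>z. h (s z)) = h (Sum_any s)"
proof -
  interpret inj_ring_hom h by (fact h)
  have "Sum_any (\<lambda>z. h (s z)) = (\<Sum>z | s z \<noteq> 0. h (s z))"
    by (rule Sum_any.expand_superset[OF fin]) (auto simp: hom_zero)
  also have "\<dots> = h (Sum_any s)" by (simp add: hom_sum Sum_any.expand_set)
  finally show ?thesis .
qed

locale orbital_residue =
  fixes q :: "'a::field" and \<iota> :: "'i::ab_group_add \<Rightarrow> int \<times> int"
    and P :: "'a poly fract poly" and m :: nat
  assumes q: "q \<noteq> 0" and irreducible: "irreducible P" and monic: "lead_coeff P = 1"
    and \<iota>_diff: "\<iota> (z - w) = \<iota> z - \<iota> w"
    and free: "act q (\<iota> z) P = P \<Longrightarrow> z = 0"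
begin

definition residue :: "'a poly fract poly fract \<Rightarrow> 'a poly fract poly" where
  "residue F = Sum_any (\<lambda>z. act q (- \<iota> z) (polar_coeff (act q (\<iota> z) P) F m))"

lemma irreducible_orbit: "irreducible (act q z P)"
  by (rule irreducible_act[OF q irreducible])

lemma inj_orbit: "inj (\<lambda>z. act q (\<iota> z) P)"
proof (rule injI)
  fix z w assume "act q (\<iota> z) P = act q (\<iota> w) P"
  hence "act q (- \<iota> w) (act q (\<iota> z) P) = P" by (simp add: act_uminus_act[OF q])
  hence "act q (\<iota> (z - w)) P = P" by (simp add: act_act[OF q] \<iota>_diff)
  thus "z = w" using free by fastforce
qed

lemma finite_residue_support:
  "finite {z. act q (- \<iota> z) (polar_coeff (act q (\<iota> z) P) F m) \<noteq> 0}"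
proof -
  have "{z. polar_coeff (act q (\<iota> z) P) F m \<noteq> 0} =
      (\<lambda>z. act q (\<iota> z) P) -` {Q. lead_coeff Q = 1 \<and> irreducible Q \<and> polar_coeff Q F m \<noteq> 0}"
    using monic_act[OF q monic] irreducible_orbit by auto
  hence "finite {z. polar_coeff (act q (\<iota> z) P) F m \<noteq> 0}"
    using finite_vimageI[OF finite_polar_support inj_orbit] by simp
  thus ?thesis
    by (rule finite_subset[rotated]) (auto simp: inj_ring_hom.hom_zero[OF inj_ring_hom_act[OF q]])
qed

lemma residue_add: "residue (F + G) = residue F + residue G"
  unfolding residue_def
  by (simp add: polar_coeff_add[OF irreducible_orbit]
      inj_ring_hom.hom_add[OF inj_ring_hom_act[OF q]]
      Sum_any.distrib[OF finite_residue_support finite_residue_support])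

lemma residue_diff: "residue (F - G) = residue F - residue G"
proof -
  have "residue 0 = 0"
    unfolding residue_def
    by (simp add: polar_coeff_regular[OF irreducible_orbit
          regular_at_0[OF irreducible_not_unit[OF irreducible_orbit]]]
        inj_ring_hom.hom_zero[OF inj_ring_hom_act[OF q]])
  thus ?thesis using residue_add[of "F - G" G] residue_add[of G "- G"] by simp
qed

lemma polar_coeff_orbit_act:
  "polar_coeff (act q z P) (act_fract q w F) m = act q w (polar_coeff (act q (z - w) P) F m)"
proof -
  have "act q z P = act q w (act q (z - w) P)" by (simp add: act_act[OF q])
  thus ?thesis using polar_coeff_act[OF q irreducible_orbit] by simp
qed

lemma residue_act: "residue (act_fract q (\<iota> w) F) = residue F"
proof -
  have "residue (act_fract q (\<iota> w) F) =
      Sum_any (\<lambda>z. act q (- \<iota> (z - w)) (polar_coeff (act q (\<iota> (z - w)) P) F m))"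
    unfolding residue_def polar_coeff_orbit_act by (simp add: act_act[OF q] \<iota>_diff)
  also have "\<dots> = residue F" unfolding residue_def by (rule Sum_any_shift)
  finally show ?thesis .
qed

lemma residue_act_stabilizer:
  assumes "act q w P = P"
  shows "residue (act_fract q w F) = act q w (residue F)"
proof -
  have "act q (z - w) P = act q z P" for z
    using act_act[OF q, of z "- w" P] act_uminus_act[OF q, of w P] assms by simp
  hence "residue (act_fract q w F) =
      Sum_any (\<lambda>z. act q w (act q (- \<iota> z) (polar_coeff (act q (\<iota> z) P) F m)))"
    unfolding residue_def polar_coeff_orbit_act by (simp add: act_act[OF q] add.commute)
  also have "\<dots> = act q w (residue F)"
    unfolding residue_def
      by (rule Sum_any_inj_ring_hom[OF inj_ring_hom_act[OF q] finite_residue_support])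
  finally show ?thesis .
qed

lemma residue_Fract_power:
  assumes "degree a < degree P" "m > 0"
  shows "residue (Fract a (P ^ m)) = a"
proof -
  have "act q (- \<iota> z) (polar_coeff (act q (\<iota> z) P) (Fract a (P ^ m)) m) = (if z = 0 then a else 0)"
    for z
  proof (cases "z = 0")
    case True
    have "\<iota> 0 = 0" using \<iota>_diff[of 0 0] by simp
    thus ?thesis using True by (simp add: act_0 polar_coeff_Fract_power[OF irreducible assms])
  next
    case False
    hence "act q (\<iota> z) P \<noteq> P" using free by blast
    hence "\<not> act q (\<iota> z) P dvd P ^ m"
      using monic_irreducible_dvd_imp_eq[OF monic_act[OF q monic] monic
          irreducible_orbit irreducible]
        prime_elem_dvd_power[OF field_poly_irreducible_imp_prime[OF irreducible_orbit]] by blast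
    moreover have "P ^ m \<noteq> 0" using irreducible by auto
    ultimately have "polar_coeff (act q (\<iota> z) P) (Fract a (P ^ m)) m = 0"
      using polar_coeff_regular[OF irreducible_orbit] regular_at_Fract by metis
    thus ?thesis using False by (simp add: inj_ring_hom.hom_zero[OF inj_ring_hom_act[OF q]])
  qed
  thus ?thesis unfolding residue_def by (simp add: Sum_any.delta)
qed

end

section \<open>Stabilisers\<close>

lemma power_eq_power_imp_eq:
  fixes u :: "'a::field"
  assumes "u \<noteq> 0" "\<forall>n::nat. n > 0 \<longrightarrow> u ^ n \<noteq> 1" "u ^ i = u ^ j"
  shows "i = j"
proof (rule ccontr)
  have *: False if "k < l" "u ^ k = u ^ l" for k l
  proof -
    have "u ^ l = u ^ k * u ^ (l - k)" using that(1) by (simp flip: power_add)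
    hence "u ^ (l - k) = 1" using that(2) assms(1) by simp
    thus False using assms(2) that(1) by auto
  qed
  assume "i \<noteq> j"
  thus False using *[of i j] *[of j i] assms(3) by (metis linorder_neqE_nat)
qed

lemma power_int_neq_1:
  fixes q :: "'a::field"
  assumes q: "q \<noteq> 0" and nr: "\<forall>n::nat. n > 0 \<longrightarrow> q ^ n \<noteq> 1" and "s \<noteq> 0"
  shows "q powi s \<noteq> 1"
proof (cases "s > 0")
  case True
  hence "q powi s = q ^ nat s" by (metis power_int_of_nat int_nat_eq less_le)
  thus ?thesis using nr True by auto
next
  case False
  hence "s = - int (nat (- s))" "nat (- s) > 0" using \<open>s \<noteq> 0\<close> by auto
  hence "q powi s = inverse (q ^ nat (- s))" by (metis power_int_minus power_int_of_nat)
  thus ?thesis using nr \<open>nat (- s) > 0\<close> by (metis inverse_1 inverse_inverse_eq)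
qed

lemma scaled_dvd_imp_monomial:
  fixes D :: "'a::field poly"
  assumes u: "u \<noteq> 0" "\<forall>n::nat. n > 0 \<longrightarrow> u ^ n \<noteq> 1"
    and D: "D \<noteq> 0" and dvd: "D \<circ>\<^sub>p [:0, u:] dvd D"
  shows "D \<circ>\<^sub>p [:0, u:] = smult (u ^ degree D) D" and "\<forall>i. i \<noteq> degree D \<longrightarrow> coeff D i = 0"
proof -
  have coeff_scaled: "coeff (D \<circ>\<^sub>p [:0, u:]) i = u ^ i * coeff D i" for i
    by (rule coeff_pcompose_linear)
  have nz: "D \<circ>\<^sub>p [:0, u:] \<noteq> 0" using D u(1) pcompose_eq_0[of D "[:0, u:]"] by auto
  from dvd obtain w where w: "D = (D \<circ>\<^sub>p [:0, u:]) * w" by (auto elim: dvdE)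
  hence "w \<noteq> 0" using D by auto
  moreover have "degree (D \<circ>\<^sub>p [:0, u:]) = degree D" using u(1) by (simp add: degree_pcompose)
  ultimately have "degree D = degree D + degree w" using w nz by (metis degree_mult_eq)
  then obtain c where "w = [:c:]" by (metis add_cancel_left_right degree_eq_zeroE)
  hence c: "coeff D i = c * u ^ i * coeff D i" for i
    using arg_cong[OF w, of "\<lambda>p. coeff p i"] by (simp add: coeff_scaled)
  define e where "e = degree D"
  have "coeff D e \<noteq> 0" unfolding e_def using D by simp
  hence ce: "c * u ^ e = 1" using c[of e] by (metis mult_cancel_right1 mult.commute)
  show zero: "\<forall>i. i \<noteq> degree D \<longrightarrow> coeff D i = 0"
  proof (intro allI impI)
    fix i assume "i \<noteq> degree D"
    show "coeff D i = 0"
    proof (rule ccontr)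
      assume "coeff D i \<noteq> 0"
      hence "c * u ^ i = 1" using c[of i] by (metis mult_cancel_right1 mult.commute)
      hence "u ^ i = u ^ e" using ce by (metis mult_left_cancel mult_zero_left one_neq_zero)
      thus False using power_eq_power_imp_eq[OF u] \<open>i \<noteq> degree D\<close> e_def by blast
    qed
  qed
  show "D \<circ>\<^sub>p [:0, u:] = smult (u ^ degree D) D"
    by (rule poly_eqI) (metis coeff_scaled coeff_smult mult_zero_right zero)
qed

text \<open>Write \<open>c = N / D\<close> in lowest terms: then \<open>\<tau>\<^sub>u D\<close> divides \<open>D\<close>, which forces \<open>D\<close>, and then \<open>N\<close>,
  to be monomials of the same degree.\<close>

lemma tau_x_eq_add_const:
  fixes u \<kappa> :: "'a::field" and c :: "'a poly fract"
  assumes u: "u \<noteq> 0" "\<forall>n::nat. n > 0 \<longrightarrow> u ^ n \<noteq> 1"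
    and eq: "tau_x u c = c + to_fract [:\<kappa>:]"
  shows "\<kappa> = 0 \<and> (\<exists>k. c = to_fract [:k:])"
proof -
  obtain N D u' v' where D: "D \<noteq> 0" and c: "c = Fract N D" and cop: "u' * N + v' * D = 1"
    by (rule Fract_coprime_representation)
  define \<phi> where "\<phi> = (\<lambda>p::'a poly. p \<circ>\<^sub>p [:0, u:])"
  interpret \<phi>: inj_ring_hom \<phi> unfolding \<phi>_def by (rule inj_ring_hom_pcompose) (simp add: u)
  have "Fract (\<phi> N) (\<phi> D) = Fract (N + [:\<kappa>:] * D) D"
    using eq c D unfolding \<phi>_def by (simp add: tau_x_Fract u to_fract_def)
  hence key: "\<phi> N * D = (N + [:\<kappa>:] * D) * \<phi> D" using D by (simp add: eq_fract \<phi>.hom_eq_0_iff)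
  have "\<phi> u' * \<phi> N + \<phi> v' * \<phi> D = 1"
    using arg_cong[OF cop, of \<phi>] by (simp add: \<phi>.hom_add \<phi>.hom_mult \<phi>.hom_one)
  hence "D = \<phi> u' * (\<phi> N * D) + (D * \<phi> v') * \<phi> D"
    by (metis mult.commute mult.left_commute distrib_left mult.right_neutral)
  hence "\<phi> D dvd D" unfolding key by (metis dvd_add dvd_mult dvd_triv_right)
  note mono = scaled_dvd_imp_monomial[OF u D this[unfolded \<phi>_def]]
  define e where "e = degree D"
  have "\<phi> N * D = smult (u ^ e) (N + [:\<kappa>:] * D) * D"
    using key mono(1) unfolding \<phi>_def e_def by (simp add: mult_smult_left mult_smult_right)
  hence \<phi>N: "\<phi> N = smult (u ^ e) (N + [:\<kappa>:] * D)" using D mult_right_cancel by blast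
  have cN: "u ^ i * coeff N i = u ^ e * (coeff N i + \<kappa> * coeff D i)" for i
    using arg_cong[OF \<phi>N, of "\<lambda>p. coeff p i"] unfolding \<phi>_def by (simp add: coeff_pcompose_linear)
  have De: "coeff D e \<noteq> 0" unfolding e_def using D by simp
  hence \<kappa>: "\<kappa> = 0" using cN[of e] u(1) by (simp add: algebra_simps)
  have "coeff N i = 0" if "i \<noteq> e" for i
  proof (rule ccontr)
    assume "coeff N i \<noteq> 0"
    hence "u ^ i = u ^ e" using cN[of i] mono(2) that e_def by simp
    thus False using power_eq_power_imp_eq[OF u] that by blast
  qed
  hence N: "N = monom (coeff N e) e" by (intro poly_eqI) (auto simp: coeff_monom)
  have D_monom: "D = monom (coeff D e) e" using mono(2) e_def
    by (intro poly_eqI) (auto simp: coeff_monom)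
  have "N * 1 = [:coeff N e / coeff D e:] * D"
    using De by (subst N, subst (2) D_monom) (simp add: smult_monom)
  hence "c = to_fract [:coeff N e / coeff D e:]" using c D by (simp add: to_fract_def eq_fract)
  thus ?thesis using \<kappa> by blast
qed

lemma coeff_pcompose_shift:
  fixes p :: "'c::idom poly"
  shows "degree p = Suc n \<Longrightarrow>
    coeff (p \<circ>\<^sub>p [:t, 1:]) n = coeff p n + of_nat (Suc n) * t * lead_coeff p"
proof (induction p arbitrary: n)
  case 0 thus ?case by simp
next
  case (pCons a p')
  have p'0: "p' \<noteq> 0" using pCons.prems by auto
  hence dp: "degree (pCons a p') = Suc (degree p')" by simp
  hence n: "n = degree p'" using pCons.prems by simp
  define X where "X = p' \<circ>\<^sub>p [:t, 1:]"
  have dX: "degree X = n" unfolding X_def n by (simp add: degree_pcompose)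
  have lX: "lead_coeff X = lead_coeff p'" unfolding X_def by (simp add: lead_coeff_comp)
  have eq: "pCons a p' \<circ>\<^sub>p [:t, 1:] = [:a:] + smult t X + pCons 0 X"
    unfolding X_def by (simp add: pcompose_pCons algebra_simps)
  have lc: "lead_coeff (pCons a p') = lead_coeff p'" using dp by simp
  show ?case
  proof (cases n)
    case 0
    thus ?thesis using dX lX lc by (simp add: eq)
  next
    case (Suc k)
    have IH: "coeff X k = coeff p' k + of_nat (Suc k) * t * lead_coeff p'"
      unfolding X_def by (rule pCons.IH) (use n Suc in simp)
    have "coeff X n = lead_coeff p'" using dX lX by simp
    thus ?thesis using Suc IH lc by (simp add: eq algebra_simps)
  qed
qed

lemma to_fract_const_of_int: "to_fract [:of_int z:] = (of_int z :: 'a::field poly fract)"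
  by (metis of_int_poly inj_ring_hom.hom_of_int[OF inj_ring_hom_to_fract])

lemma act_stabilizer:
  fixes q :: "'a::field_char_0" and P :: "'a poly fract poly"
  assumes q: "q \<noteq> 0" and nr: "\<forall>n::nat. n > 0 \<longrightarrow> q ^ n \<noteq> 1"
    and monic: "lead_coeff P = 1" and deg: "degree P > 0" and fixed: "act q (s, t) P = P"
  shows "t = 0 \<and> (s = 0 \<or> (\<forall>i. \<exists>k. coeff P i = to_fract [:k:]))"
proof -
  obtain n where n: "degree P = Suc n" using deg by (cases "degree P") auto
  define u where "u = q powi s"
  have u: "u \<noteq> 0" using q by (simp add: u_def)
  interpret \<tau>: inj_ring_hom "tau_x u" by (rule inj_ring_hom_tau_x[OF u])
  define T where "T = int (Suc n) * t"
  define \<kappa> :: 'a where "\<kappa> = of_int (- T)"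
  have coeff_act: "coeff (act q (s, t) P) i = tau_x u (coeff (P \<circ>\<^sub>p [:of_int t, 1:]) i)" for i
    unfolding act_def u_def by (simp add: coeff_map_poly \<tau>.hom_zero[unfolded u_def])
  have "tau_x u (coeff P n + of_int T) = coeff P n"
    using coeff_act[of n] coeff_pcompose_shift[OF n, of "of_int t"] fixed monic by (simp add: T_def)
  hence "tau_x u (coeff P n) + of_int T = coeff P n" by (simp only: \<tau>.hom_add \<tau>.hom_of_int)
  hence twist: "tau_x u (coeff P n) = coeff P n + to_fract [:\<kappa>:]"
    unfolding \<kappa>_def to_fract_const_of_int by (simp add: eq_diff_eq)
  have t: "t = 0" if "\<kappa> = 0" using that by (simp add: \<kappa>_def T_def del: of_nat_Suc)
  show ?thesis
  proof (cases "s = 0")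
    case True
    hence "to_fract [:\<kappa>:] = 0" using twist by (simp add: u_def tau_x_1)
    thus ?thesis using t True by simp
  next
    case False
    have "u ^ k \<noteq> 1" if "k > 0" for k :: nat
      using power_int_neq_1[OF q nr, of "s * int k"] False that
      by (simp add: u_def power_int_power')
    hence nr_u: "\<forall>k::nat. k > 0 \<longrightarrow> u ^ k \<noteq> 1" by blast
    have "t = 0" using tau_x_eq_add_const[OF u nr_u twist] t by blast
    have "\<exists>k. coeff P i = to_fract [:k:]" for i
    proof -
      have "tau_x u (coeff P i) = coeff P i + to_fract [:0:]"
        using coeff_act[of i] fixed \<open>t = 0\<close> by simp
      thus ?thesis using tau_x_eq_add_const[OF u nr_u] by blast
    qed
    thus ?thesis using \<open>t = 0\<close> by blast
  qed
qed

lemma act_smult: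
  assumes "q \<noteq> 0"
  shows "act q z (smult c p) = smult (tau_x (q powi fst z) c) (act q z p)"
proof -
  interpret \<tau>: inj_ring_hom "tau_x (q powi fst z)" by (rule inj_ring_hom_tau_x) (simp add: assms)
  show ?thesis
    by (rule poly_eqI) (simp add: act_def pcompose_smult coeff_map_poly \<tau>.hom_zero \<tau>.hom_mult)
qed

lemma act_fixed_if_const_coeffs:
  assumes "q \<noteq> 0" and "\<forall>i. \<exists>k. coeff P i = to_fract [:k:]"
  shows "act q (s, 0) P = P"
proof (rule poly_eqI)
  fix i
  obtain k where "coeff P i = to_fract [:k:]" using assms(2) by blast
  thus "coeff (act q (s, 0) P) i = coeff P i"
    using assms(1)
      by (simp add: act_def coeff_map_poly inj_ring_hom.hom_zero inj_ring_hom_tau_x tau_x_const)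
qed

section \<open>Gauss's lemma for \<open>k[x][y]\<close>\<close>

lemma fract_poly_clear_denominators:
  fixes A :: "'b::idom fract poly"
  shows "\<exists>\<alpha> A'. \<alpha> \<noteq> 0 \<and> smult (to_fract \<alpha>) A = map_poly to_fract A'"
proof (induction A)
  case 0 show ?case by (intro exI[of _ 1] exI[of _ 0]) simp
next
  case (pCons c A1)
  from pCons.IH obtain \<alpha>1 A1' where IH: "\<alpha>1 \<noteq> 0" "smult (to_fract \<alpha>1) A1 = map_poly to_fract A1'"
    by blast
  obtain n \<delta> where c: "c = Fract n \<delta>" "\<delta> \<noteq> 0" by (cases c)
  have e1: "to_fract (\<delta> * \<alpha>1) * c = to_fract (\<alpha>1 * n)"
    using c by (simp add: to_fract_def eq_fract algebra_simps)
  have e2: "smult (to_fract (\<delta> * \<alpha>1)) A1 = map_poly to_fract (smult \<delta> A1')"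
  proof -
    have "smult (to_fract (\<delta> * \<alpha>1)) A1 = smult (to_fract \<delta>) (smult (to_fract \<alpha>1) A1)"
      by (simp add: smult_smult)
    also have "\<dots> = map_poly to_fract (smult \<delta> A1')" using IH(2) by simp
    finally show ?thesis .
  qed
  have "smult (to_fract (\<delta> * \<alpha>1)) (pCons c A1) = map_poly to_fract (pCons (\<alpha>1 * n) (smult \<delta> A1'))"
    using e1 e2 by (simp add: map_poly_pCons)
  moreover have "\<delta> * \<alpha>1 \<noteq> 0" using c IH by simp
  ultimately show ?case by blast
qed

lemma prime_dvd_coeffs_mult:
  fixes A B :: "'b::idom poly"
  assumes p: "prime_elem \<pi>" and ab: "\<forall>i. \<pi> dvd coeff (A * B) i"
  shows "(\<forall>i. \<pi> dvd coeff A i) \<or> (\<forall>i. \<pi> dvd coeff B i)"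
proof (rule ccontr)
  assume "\<not> ?thesis"
  then obtain i0 j0 where "\<not> \<pi> dvd coeff A i0" "\<not> \<pi> dvd coeff B j0" by blast
  define i where "i = (LEAST i. \<not> \<pi> dvd coeff A i)"
  define j where "j = (LEAST j. \<not> \<pi> dvd coeff B j)"
  have ni: "\<not> \<pi> dvd coeff A i" unfolding i_def by (rule LeastI[of _ i0]) fact
  have nj: "\<not> \<pi> dvd coeff B j" unfolding j_def by (rule LeastI[of _ j0]) fact
  have li: "\<pi> dvd coeff A k" if "k < i" for k using not_less_Least[OF that[unfolded i_def]] i_def
    by blast
  have lj: "\<pi> dvd coeff B k" if "k < j" for k using not_less_Least[OF that[unfolded j_def]] j_def
    by blast
  have "coeff (A * B) (i + j) = (\<Sum>k\<le>i + j. coeff A k * coeff B (i + j - k))" by (rule coeff_mult)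
  also have "\<dots> = coeff A i * coeff B j + (\<Sum>k\<in>{..i + j} - {i}. coeff A k * coeff B (i + j - k))"
    by (subst sum.remove[of _ i]) auto
  finally have eq: "coeff (A * B) (i + j) =
      coeff A i * coeff B j + (\<Sum>k\<in>{..i + j} - {i}. coeff A k * coeff B (i + j - k))" .
  have "\<pi> dvd (\<Sum>k\<in>{..i + j} - {i}. coeff A k * coeff B (i + j - k))"
  proof (rule dvd_sum)
    fix k assume "k \<in> {..i + j} - {i}"
    hence "k < i \<or> (i < k \<and> k \<le> i + j)" by auto
    thus "\<pi> dvd coeff A k * coeff B (i + j - k)"
    proof
      assume "k < i" thus ?thesis using li by simp
    next
      assume "i < k \<and> k \<le> i + j"
      hence "i + j - k < j" by arith
      thus ?thesis using lj by simp
    qed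
  qed
  moreover have "\<pi> dvd coeff (A * B) (i + j)" using ab by blast
  ultimately have "\<pi> dvd coeff A i * coeff B j" using eq by (metis dvd_add_left_iff)
  thus False using prime_elem_dvd_multD[OF p] ni nj by blast
qed

lemma exists_irreducible_factor:
  fixes p :: "'b::field poly"
  shows "degree p > 0 \<Longrightarrow> \<exists>\<pi>. irreducible \<pi> \<and> \<pi> dvd p"
proof (induction "degree p" arbitrary: p rule: less_induct)
  case less
  show ?case
  proof (cases "irreducible p")
    case True thus ?thesis by (intro exI[of _ p]) simp
  next
    case False
    have p0: "p \<noteq> 0" using less.prems by auto
    hence nu: "\<not> is_unit p" using less.prems is_unit_iff_degree[of p] by auto
    from False p0 nu obtain a b where ab: "p = a * b" "\<not> is_unit a" "\<not> is_unit b"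
      by (auto simp: irreducible_def)
    have a0: "a \<noteq> 0" and b0: "b \<noteq> 0" using ab p0 by auto
    have "degree a > 0" "degree b > 0" using ab(2,3) a0 b0 is_unit_iff_degree by auto
    moreover have "degree p = degree a + degree b" using ab(1) a0 b0 by (simp add: degree_mult_eq)
    ultimately have "degree a < degree p" by simp
    from less.hyps[OF this \<open>degree a > 0\<close>] obtain \<pi> where "irreducible \<pi>" "\<pi> dvd a" by blast
    thus ?thesis using ab(1) by auto
  qed
qed

lemma smult_cancel_const_factor:
  fixes A B d :: "'b::idom poly"
  assumes "\<pi> \<noteq> 0" "\<forall>i. \<pi> dvd coeff A i" "smult (\<pi> * c) d = A * B"
  shows "\<exists>A'. degree A' = degree A \<and> smult c d = A' * B"
proof -
  have "[:\<pi>:] dvd A" using assms(2) by (simp add: const_poly_dvd_iff)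
  then obtain A' where A': "A = [:\<pi>:] * A'" by (auto elim: dvdE)
  have "[:\<pi>:] * smult c d = [:\<pi>:] * (A' * B)" using assms(3) A' by (simp add: ac_simps)
  moreover have "[:\<pi>:] \<noteq> 0" using assms(1) by simp
  ultimately have "smult c d = A' * B" using mult_left_cancel by blast
  moreover have "degree A' = degree A" using A' assms(1) by simp
  ultimately show ?thesis by blast
qed

lemma irreducible_smult_factor_degree:
  fixes d A B :: "'a::field poly poly" and c :: "'a poly"
  assumes irr: "irreducible d"
  shows "c \<noteq> 0 \<Longrightarrow> smult c d = A * B \<Longrightarrow> degree A = 0 \<or> degree B = 0"
proof (induction "degree c" arbitrary: c A B rule: less_induct)
  case less
  show ?case
  proof (cases "degree c = 0")
    case True
    then obtain c0 where c0: "c = [:c0:]" by (rule degree_eq_zeroE)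
    hence c00: "c0 \<noteq> 0" using less.prems by simp
    define c' where "c' = [:inverse c0:]"
    have "smult c' (smult c d) = d" using c00 by (simp add: c0 c'_def one_pCons[symmetric])
    hence "d = smult c' A * B" using less.prems(2) by simp
    hence "is_unit (smult c' A) \<or> is_unit B" using irreducibleD[OF irr] by blast
    moreover have "degree (smult c' A) = degree A" using c00 by (simp add: c'_def)
    moreover have dunit: "is_unit p \<Longrightarrow> degree p = 0" for p :: "'a poly poly"
      by (auto elim!: is_unit_polyE)
    ultimately show ?thesis by metis
  next
    case False
    then obtain \<pi> where pi: "irreducible \<pi>" "\<pi> dvd c" using exists_irreducible_factor[of c] by auto
    then obtain c' where c': "c = \<pi> * c'" by (auto elim: dvdE)
    have pr: "prime_elem \<pi>" using pi(1) by (rule field_poly_irreducible_imp_prime)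
    have pi0: "\<pi> \<noteq> 0" using pr by auto
    have c'0: "c' \<noteq> 0" using c' less.prems(1) by auto
    have dpi: "degree \<pi> > 0" using irreducible_field_poly_degree[OF pi(1)] .
    have "degree c = degree \<pi> + degree c'" using c' pi0 c'0 by (simp add: degree_mult_eq)
    hence dlt: "degree c' < degree c" using dpi by simp
    have "\<forall>i. \<pi> dvd coeff (A * B) i" using less.prems(2)[symmetric] c' by simp
    hence divides: "(\<forall>i. \<pi> dvd coeff A i) \<or> (\<forall>i. \<pi> dvd coeff B i)"
      by (rule prime_dvd_coeffs_mult[OF pr])
    have prod: "smult (\<pi> * c') d = A * B" using less.prems(2) c' by simp
    hence prod': "smult (\<pi> * c') d = B * A" by (simp add: mult.commute)
    from divides show ?thesis
    proof
      assume "\<forall>i. \<pi> dvd coeff A i"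
      from smult_cancel_const_factor[OF pi0 this prod]
      obtain A' where "degree A' = degree A" "smult c' d = A' * B" by blast
      thus ?thesis using less.hyps[OF dlt c'0] by metis
    next
      assume "\<forall>i. \<pi> dvd coeff B i"
      from smult_cancel_const_factor[OF pi0 this prod']
      obtain B' where "degree B' = degree B" "smult c' d = B' * A" by blast
      thus ?thesis using less.hyps[OF dlt c'0] by metis
    qed
  qed
qed

lemma irreducible_emb_xy:
  fixes d :: "'a::field poly poly"
  assumes irr: "irreducible d" and dd: "degree d > 0"
  shows "irreducible (emb_xy d)"
proof (rule irreducibleI)
  have d0: "d \<noteq> 0" using irr by (auto simp: irreducible_def)
  have deg: "degree (emb_xy d) = degree d" unfolding emb_xy_def by (simp add: degree_map_poly)
  show "emb_xy d \<noteq> 0" unfolding emb_xy_def using d0 by simp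
  show "\<not> is_unit (emb_xy d)" using deg dd is_unit_iff_degree[of "emb_xy d"] \<open>emb_xy d \<noteq> 0\<close> by simp
  fix A B assume AB: "emb_xy d = A * B"
  show "is_unit A \<or> is_unit B"
  proof (rule ccontr)
    assume nu: "\<not> (is_unit A \<or> is_unit B)"
    have A0: "A \<noteq> 0" and B0: "B \<noteq> 0" using AB \<open>emb_xy d \<noteq> 0\<close> by auto
    have dA: "degree A > 0" and dB: "degree B > 0" using nu A0 B0 is_unit_iff_degree by auto
    obtain \<alpha> A' where A': "\<alpha> \<noteq> 0" "smult (to_fract \<alpha>) A = map_poly to_fract A'"
      using fract_poly_clear_denominators by blast
    obtain \<beta> B' where B': "\<beta> \<noteq> 0" "smult (to_fract \<beta>) B = map_poly to_fract B'"
      using fract_poly_clear_denominators by blast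
    have "map_poly to_fract (smult (\<alpha> * \<beta>) d) = smult (to_fract \<alpha>) A * smult (to_fract \<beta>) B"
      using AB unfolding emb_xy_def by (simp add: mult_ac)
    also have "\<dots> = map_poly to_fract (A' * B')" using A' B' by simp
    finally have "smult (\<alpha> * \<beta>) d = A' * B'" using fract_poly_eq_iff by blast
    moreover have "\<alpha> * \<beta> \<noteq> 0" using A' B' by simp
    ultimately have "degree A' = 0 \<or> degree B' = 0"
      by (intro irreducible_smult_factor_degree[OF irr])
    moreover have "degree A' = degree A"
      using arg_cong[OF A'(2), of degree] A'(1) by (simp add: degree_map_poly)
    moreover have "degree B' = degree B"
      using arg_cong[OF B'(2), of degree] B'(1) by (simp add: degree_map_poly)
    ultimately show False using dA dB by simp
  qed
qed

lemma irreducible_const_multiple_coeffs: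
  fixes d :: "'a::field poly poly"
  assumes irr: "irreducible d" and deg: "degree d > 0" and coeffs: "\<forall>i. \<exists>k. coeff d i = smult k c"
  shows "\<forall>i. degree (coeff d i) = 0"
proof -
  have "[:c:] dvd d" unfolding const_poly_dvd_iff
    using coeffs by (metis dvd_smult dvd_refl)
  then obtain d' where d': "d = [:c:] * d'" by (auto elim: dvdE)
  have "\<not> is_unit d'"
  proof
    assume "is_unit d'"
    hence "degree d' = 0" by (auto elim!: is_unit_polyE)
    thus False using d' deg by (simp split: if_splits)
  qed
  hence "is_unit c" using irreducibleD[OF irr d'] by (simp add: is_unit_const_poly_iff)
  hence "degree c = 0" by (metis is_unit_iff_degree not_is_unit_0)
  show ?thesis
  proof
    fix i
    obtain k where "coeff d i = smult k c" using coeffs by blast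
    thus "degree (coeff d i) = 0" using \<open>degree c = 0\<close> degree_smult_le[of k c] by simp
  qed
qed

lemma irreducible_emb_xy_const_coeffs:
  fixes d :: "'a::field poly poly"
  assumes "irreducible d" and "degree d > 0"
    and "\<forall>i. \<exists>k. coeff (smult (inverse (lead_coeff (emb_xy d))) (emb_xy d)) i = to_fract [:k:]"
  shows "\<forall>i. degree (coeff d i) = 0"
proof (rule irreducible_const_multiple_coeffs[OF assms(1,2)], rule allI)
  fix i
  obtain k where "inverse (lead_coeff (emb_xy d)) * coeff (emb_xy d) i = to_fract [:k:]"
    using assms(3) by auto
  moreover have "lead_coeff (emb_xy d) \<noteq> 0" using assms(2) by (auto simp: emb_xy_def)
  ultimately have "to_fract (coeff d i) = to_fract [:k:] * to_fract (lead_coeff d)"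
    by (simp add: emb_xy_def degree_map_poly coeff_map_poly field_simps)
  hence "coeff d i = [:k:] * lead_coeff d" by (metis to_fract_mult to_fract_eq_iff)
  thus "\<exists>k. coeff d i = smult k (lead_coeff d)" by auto
qed

section \<open>Exactness of \<open>a / d\<^sup>m\<close>\<close>

lemma Fract_power_monic:
  fixes D :: "'b::field poly"
  assumes "D \<noteq> 0"
  shows "Fract a (D ^ m) =
    Fract (smult (inverse (lead_coeff D ^ m)) a) (smult (inverse (lead_coeff D)) D ^ m)"
  using assms by (simp add: eq_fract smult_power field_simps)

context
  fixes q :: "'a::field_char_0" and P a :: "'a poly fract poly" and m :: nat
  assumes q: "q \<noteq> 0" and not_root: "\<forall>n::nat. n > 0 \<longrightarrow> q ^ n \<noteq> 1"
    and irreducible: "irreducible P" and monic: "lead_coeff P = 1"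
    and a: "a \<noteq> 0" "degree a < degree P" and m: "m > 0"
    and exact: "exact q (Fract a (P ^ m))"
begin

lemma exact_pole_decomposition:
  obtains g h where "Fract a (P ^ m) = (act_fract q (1, 0) g - g) + (act_fract q (0, 1) h - h)"
  using exact unfolding exact_iff_act_fract by blast

lemma degree_P_pos: "degree P > 0"
  using a(2) by simp

text \<open>If \<open>\<tau>\<close> moved \<open>P\<close>, the stabiliser of \<open>P\<close> in \<open>\<int>\<^sup>2\<close> would be trivial, and the residue over the
  full orbit would kill \<open>\<Delta>\<^sub>x g + \<Delta>\<^sub>y h\<close> but not \<open>a / P\<^sup>m\<close>.\<close>

lemma exact_pole_tau_fixed: "act q (1, 0) P = P"
proof (rule ccontr)
  assume moved: "act q (1, 0) P \<noteq> P"
  interpret R: orbital_residue q "\<lambda>z::int \<times> int. z" P m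
  proof
    fix z :: "int \<times> int" assume "act q z P = P"
    moreover obtain s t where z: "z = (s, t)" by fastforce
    ultimately have "t = 0 \<and> (s = 0 \<or> (\<forall>i. \<exists>k. coeff P i = to_fract [:k:]))"
      using act_stabilizer[OF q not_root monic degree_P_pos] by blast
    thus "z = 0" using act_fixed_if_const_coeffs[OF q] moved z by (auto simp: zero_prod_def)
  qed (use q irreducible monic in simp_all)
  obtain g h where gh: "Fract a (P ^ m) = (act_fract q (1, 0) g - g) + (act_fract q (0, 1) h - h)"
    by (rule exact_pole_decomposition)
  have "a = R.residue (Fract a (P ^ m))" by (rule R.residue_Fract_power[OF a(2) m, symmetric])
  also have "\<dots> = 0" unfolding gh by (simp add: R.residue_add R.residue_diff R.residue_act)
  finally show False using a(1) by simp
qed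

text \<open>As \<open>\<tau>\<close> fixes \<open>P\<close>, the residue over the \<open>\<sigma>\<^sub>y\<close>-orbit commutes with \<open>\<tau>\<close>; applied to
  \<open>\<Delta>\<^sub>x g + \<Delta>\<^sub>y h\<close> it gives \<open>\<tau> b - b\<close>.\<close>

lemma exact_pole_DeltaX: "\<exists>b. a = act q (1, 0) b - b"
proof -
  interpret R: orbital_residue q "\<lambda>t::int. (0, t)" P m
  proof
    fix t :: int assume "act q (0, t) P = P"
    thus "t = 0" using act_stabilizer[OF q not_root monic degree_P_pos] by blast
  qed (use q irreducible monic in simp_all)
  obtain g h where gh: "Fract a (P ^ m) = (act_fract q (1, 0) g - g) + (act_fract q (0, 1) h - h)"
    by (rule exact_pole_decomposition)
  have "a = R.residue (Fract a (P ^ m))" by (rule R.residue_Fract_power[OF a(2) m, symmetric])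
  also have "\<dots> = act q (1, 0) (R.residue g) - R.residue g"
    unfolding gh using R.residue_act[of 1]
    by (simp add: R.residue_add R.residue_diff R.residue_act_stabilizer[OF exact_pole_tau_fixed])
  finally show ?thesis ..
qed

lemma exact_pole_const_coeffs: "\<forall>i. \<exists>k. coeff P i = to_fract [:k:]"
  using act_stabilizer[OF q not_root monic degree_P_pos exact_pole_tau_fixed] by simp

end

lemma to_fract_div_power: "D \<noteq> 0 \<Longrightarrow> to_fract a / to_fract D ^ m = Fract a (D ^ m)"
  by (simp flip: inj_ring_hom.hom_power[OF inj_ring_hom_to_fract]) (simp add: to_fract_def)

lemma lead_coeff_emb_xy_tau_fixed:
  assumes "q \<noteq> 0" "\<forall>i. degree (coeff d i) = 0"
  shows "tau_x q (lead_coeff (emb_xy d) ^ m) = lead_coeff (emb_xy d) ^ m"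
proof -
  obtain c where "lead_coeff d = [:c:]" using assms(2) degree_eq_zeroE by blast
  thus ?thesis using assms(1)
    by (simp add: emb_xy_def degree_map_poly coeff_map_poly tau_x_const
        inj_ring_hom.hom_power[OF inj_ring_hom_tau_x])
qed

lemma exact_emb_xy_pole_imp:
  fixes q :: "'a::field_char_0" and d :: "'a poly poly" and a :: "'a poly fract poly"
  assumes q: "q \<noteq> 0" and not_root: "\<forall>n::nat. n > 0 \<longrightarrow> q ^ n \<noteq> 1"
    and irr: "irreducible d" and m: "m > 0" and a: "a \<noteq> 0" "degree a < degree d"
    and exact: "exact q (to_fract a / to_fract (emb_xy d) ^ m)"
  shows "(\<forall>i. degree (coeff d i) = 0) \<and> (\<exists>b. a = act q (1, 0) b - b)"
proof -
  define D where "D = emb_xy d"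
  define l where "l = lead_coeff D"
  define P where "P = smult (inverse l) D"
  define a' where "a' = smult (inverse (l ^ m)) a"
  have deg: "degree d > 0" "degree D = degree d" using a(2)
    by (auto simp: D_def emb_xy_def degree_map_poly)
  have "irreducible D" using irreducible_emb_xy[OF irr deg(1)] by (simp add: D_def)
  hence "D \<noteq> 0" by auto
  hence "l \<noteq> 0" by (simp add: l_def)
  hence P: "irreducible P" "lead_coeff P = 1" "degree P = degree D"
    using \<open>irreducible D\<close> \<open>l \<noteq> 0\<close> irreducible_mult_unit_left[of "[:inverse l:]" D]
    by (auto simp: P_def l_def is_unit_const_poly_iff dvd_field_iff)
  have a': "a' \<noteq> 0" "degree a' < degree P" using a \<open>l \<noteq> 0\<close> P(3) deg by (auto simp: a'_def)
  have "exact q (Fract a' (P ^ m))"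
    using exact Fract_power_monic[OF \<open>D \<noteq> 0\<close>] to_fract_div_power[OF \<open>D \<noteq> 0\<close>]
    by (simp add: D_def l_def P_def a'_def)
  note pole = q not_root P(1,2) a' m this
  have const: "\<forall>i. degree (coeff d i) = 0"
    using irreducible_emb_xy_const_coeffs[OF irr deg(1)] exact_pole_const_coeffs[OF pole]
    by (simp add: P_def D_def l_def)
  obtain b where b: "a' = act q (1, 0) b - b" using exact_pole_DeltaX[OF pole] by blast
  have "a = smult (l ^ m) a'" using \<open>l \<noteq> 0\<close> by (simp add: a'_def)
  also have "\<dots> = act q (1, 0) (smult (l ^ m) b) - smult (l ^ m) b"
    using lead_coeff_emb_xy_tau_fixed[OF q const]
    by (simp add: b act_smult[OF q] l_def D_def smult_diff_right)
  finally show ?thesis using const by blast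
qed

lemma exact_emb_xy_pole_if:
  assumes q: "q \<noteq> 0" and const: "\<forall>i. degree (coeff d i) = 0" and "d \<noteq> 0"
    and a: "a = act q (1, 0) b - b"
  shows "exact q (to_fract a / to_fract (emb_xy d) ^ m)"
proof -
  define D where "D = emb_xy d"
  have "D \<noteq> 0" using \<open>d \<noteq> 0\<close> by (simp add: D_def emb_xy_def)
  have "\<forall>i. \<exists>k. coeff D i = to_fract [:k:]"
  proof
    fix i
    have "coeff D i = to_fract [:coeff (coeff d i) 0:]"
      using degree_0_id[OF const[rule_format, of i]] by (simp add: D_def emb_xy_def coeff_map_poly)
    thus "\<exists>k. coeff D i = to_fract [:k:]" by (rule exI)
  qed
  hence "act q (1, 0) D = D" by (rule act_fixed_if_const_coeffs[OF q])
  hence "act_fract q (1, 0) (Fract b (D ^ m)) = Fract (act q (1, 0) b) (D ^ m)"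
    using \<open>D \<noteq> 0\<close>
    by (simp add: act_fract_Fract[OF q] inj_ring_hom.hom_power[OF inj_ring_hom_act[OF q]])
  hence "Fract a (D ^ m) = (act_fract q (1, 0) (Fract b (D ^ m)) - Fract b (D ^ m))
      + (act_fract q (0, 1) 0 - 0)"
    using \<open>D \<noteq> 0\<close>
    by (simp del: diff_fract add: a Fract_diff_same
        inj_ring_hom.hom_zero[OF inj_ring_hom_act_fract[OF q]])
  moreover have "to_fract a / to_fract (emb_xy d) ^ m = Fract a (D ^ m)"
    using to_fract_div_power[OF \<open>D \<noteq> 0\<close>] by (simp add: D_def)
  ultimately show ?thesis unfolding exact_iff_act_fract by metis
qed

theorem lemma4:
  fixes q :: "'a::field_char_0"
    and m :: nat
    and d :: "'a poly poly"
    and a :: "'a poly fract poly"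
  assumes "q \<noteq> 0"
    and "\<forall>n::nat. n > 0 \<longrightarrow> q ^ n \<noteq> 1"
    and "irreducible d"
    and "m > 0"
    and "a \<noteq> 0"
    and "degree a < degree d"
  shows "exact q (to_fract a / (to_fract (emb_xy d)) ^ m) \<longleftrightarrow>
           ((\<forall>i. degree (coeff d i) = 0) \<and>
            (\<exists>b :: 'a poly fract poly. to_fract a = DeltaX q (to_fract b)))"
proof -
  have "(\<exists>b. to_fract a = DeltaX q (to_fract b)) \<longleftrightarrow> (\<exists>b. a = act q (1, 0) b - b)"
    by (simp add: DeltaX_to_fract[OF assms(1)] del: to_fract_diff)
  moreover have "d \<noteq> 0" using assms(3) by auto
  ultimately show ?thesis
    using exact_emb_xy_pole_imp[OF assms] exact_emb_xy_pole_if[OF assms(1)] by blast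
qed

end
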